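(* Let $G$ be a graph and $a\neq b$ vertices of $G$. Then $a$ and $b$ are twins (i.e. $N(a)\setminus\{b\}=N(b)\setminus\{a\}$) if and only if the eigenvalue support of $e_a-e_b$ with respect to the Laplacian of $G$ consists of one eigenvalue, which is an integer.
   Context: $N(v)$ denotes the neighbourhood of $v$. Let $L=\Delta-A$ be the Laplacian of $G$ with spectral decomposition $L=\sum_r\theta_rE_r$ ($\theta_r$ distinct eigenvalues, $E_r$ orthogonal projections onto eigenspaces). The eigenvalue support of $x$ is the set of $\theta_r$ with $E_rx\neq0$. *)

theory Defs
  imports "HOL-Analysis.Analysis"
begin

definition simple_graph :: "('n::finite \<Rightarrow> 'n \<Rightarrow> bool) \<Rightarrow> bool" where
  "simple_graph E \<longleftrightarrow> (\<forall>u v. E u v \<longleftrightarrow> E v u) \<and> (\<forall>v. \<not> E v v)"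

definition nbhd :: "('n \<Rightarrow> 'n \<Rightarrow> bool) \<Rightarrow> 'n \<Rightarrow> 'n set" where
  "nbhd E v = {u. E v u}"

definition twins :: "('n \<Rightarrow> 'n \<Rightarrow> bool) \<Rightarrow> 'n \<Rightarrow> 'n \<Rightarrow> bool" where
  "twins E a b \<longleftrightarrow> nbhd E a - {b} = nbhd E b - {a}"

definition laplacian :: "('n::finite \<Rightarrow> 'n \<Rightarrow> bool) \<Rightarrow> real^'n^'n" where
  "laplacian E = (\<chi> i j. (if i = j then real (card (nbhd E i)) else 0)
                        - (if E i j then 1 else 0))"

definition eigenspace :: "real^'n^'n \<Rightarrow> real \<Rightarrow> (real^'n) set" where
  "eigenspace M \<theta> = {v. M *v v = \<theta> *\<^sub>R v}"

definition is_eigenvalue :: "real^'n^'n \<Rightarrow> real \<Rightarrow> bool" where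
  "is_eigenvalue M \<theta> \<longleftrightarrow> (\<exists>v. v \<noteq> 0 \<and> M *v v = \<theta> *\<^sub>R v)"

definition orth_proj :: "(real^'n) set \<Rightarrow> real^'n \<Rightarrow> real^'n" where
  "orth_proj W x = (THE y. y \<in> W \<and> (\<forall>w\<in>W. (x - y) \<bullet> w = 0))"

definition eig_proj :: "real^'n^'n \<Rightarrow> real \<Rightarrow> real^'n \<Rightarrow> real^'n" where
  "eig_proj M \<theta> x = orth_proj (eigenspace M \<theta>) x"

definition eigenvalue_support :: "real^'n^'n \<Rightarrow> real^'n \<Rightarrow> real set" where
  "eigenvalue_support M x = {\<theta>. is_eigenvalue M \<theta> \<and> eig_proj M \<theta> x \<noteq> 0}"

end

theory Submission
  imports Defs
begin

text \<open>For a symmetric matrix, the eigenvalue support of a nonzero vector is a single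
eigenvalue \<open>\<theta>\<close> exactly when the vector is itself a \<open>\<theta>\<close>-eigenvector: its component
orthogonal to the \<open>\<theta>\<close>-eigenspace is orthogonal to every eigenvector, hence zero: the
vectors orthogonal to all eigenvectors form an invariant subspace, and a maximiser of the
Rayleigh quotient on any nonzero invariant subspace is an eigenvector lying in it. For the Laplacian,
\<open>e\<^sub>a - e\<^sub>b\<close> is an eigenvector precisely when \<open>a\<close> and \<open>b\<close> have the same neighbours
outside \<open>{a, b}\<close> (which also forces equal degrees), and the eigenvalue is then the
integer \<open>deg a + [a \<sim> b]\<close>.\<close>

lemma symmetric_matrix_inner:
  fixes M :: "real^'n^'n"
  assumes "transpose M = M"
  shows "(M *v u) \<bullet> v = u \<bullet> (M *v v)"
  by (metis assms dot_lmul_matrix transpose_matrix_vector)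

lemma eigenvectors_orthogonal:
  fixes M :: "real^'n^'n"
  assumes "transpose M = M" and "M *v u = \<theta> *\<^sub>R u" and "M *v v = \<mu> *\<^sub>R v" and "\<theta> \<noteq> \<mu>"
  shows "u \<bullet> v = 0"
proof -
  have "\<theta> * (u \<bullet> v) = \<mu> * (u \<bullet> v)"
    using symmetric_matrix_inner[OF assms(1), of u v] assms(2,3) by simp
  with assms(4) show ?thesis by simp
qed

lemma linear_coeff_zero_if_quadratic_nonneg:
  fixes c d :: real
  assumes "\<And>t. 0 \<le> 2 * t * c + t\<^sup>2 * d"
  shows "c = 0"
proof (rule ccontr)
  assume "c \<noteq> 0"
  define s where "s = 1 / (\<bar>d\<bar> + 1)"
  have "s > 0" and "s * d < 1"
    unfolding s_def by (auto simp: field_simps abs_if)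
  hence "c\<^sup>2 * s * (s * d - 2) < 0"
    using \<open>c \<noteq> 0\<close> by (simp add: mult_pos_neg)
  moreover have "c\<^sup>2 * s * (s * d - 2) = 2 * (- c * s) * c + (- c * s)\<^sup>2 * d"
    by (simp add: algebra_simps power2_eq_square)
  ultimately show False using assms[of "- c * s"] by linarith
qed

lemma rayleigh_maximizer_is_eigenvector:
  fixes M :: "real^'n^'n"
  assumes sym: "transpose M = M" and U: "subspace U" and inv: "\<And>w. w \<in> U \<Longrightarrow> M *v w \<in> U"
    and z: "z \<in> U" "z \<bullet> z = 1"
    and max: "\<And>w. w \<in> U \<Longrightarrow> w \<bullet> (M *v w) \<le> (z \<bullet> (M *v z)) * (w \<bullet> w)"
  shows "M *v z = (z \<bullet> (M *v z)) *\<^sub>R z"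
proof -
  define l where "l = z \<bullet> (M *v z)"
  define Q where "Q u = l * (u \<bullet> u) - u \<bullet> (M *v u)" for u
  \<comment> \<open>\<open>Q \<ge> 0\<close> on \<open>U\<close> and \<open>Q z = 0\<close>; for this \<open>w\<close> the cross term of \<open>Q (z + t w)\<close> is \<open>2 t |w|\<^sup>2\<close>.\<close>
  define w where "w = l *\<^sub>R z - M *v z"
  have "w \<in> U"
    unfolding w_def using U z inv by (simp add: subspace_diff subspace_scale)
  have "0 \<le> 2 * t * (w \<bullet> w) + t\<^sup>2 * Q w" for t
  proof -
    have "z + t *\<^sub>R w \<in> U"
      using U z \<open>w \<in> U\<close> by (simp add: subspace_add subspace_scale)
    hence "0 \<le> Q (z + t *\<^sub>R w)"
      using max unfolding Q_def l_def by simp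
    also have "Q (z + t *\<^sub>R w) = Q z + 2 * t * (w \<bullet> w) + t\<^sup>2 * Q w"
      using symmetric_matrix_inner[OF sym, of z w]
      unfolding Q_def w_def
      by (simp add: algebra_simps inner_commute power2_eq_square)
    also have "Q z = 0"
      unfolding Q_def l_def using z by simp
    finally show ?thesis by simp
  qed
  hence "w \<bullet> w = 0"
    by (rule linear_coeff_zero_if_quadratic_nonneg)
  thus ?thesis
    unfolding w_def l_def by simp
qed

lemma symmetric_invariant_subspace_has_eigenvector:
  fixes M :: "real^'n^'n"
  assumes sym: "transpose M = M" and U: "subspace U" and inv: "\<And>w. w \<in> U \<Longrightarrow> M *v w \<in> U"
    and "U \<noteq> {0}"
  obtains v l where "v \<in> U" "v \<noteq> 0" "M *v v = l *\<^sub>R v"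
proof -
  define S where "S = U \<inter> sphere 0 1"
  have "compact S"
    unfolding S_def using closed_subspace[OF U] by (metis Int_commute compact_Int_closed compact_sphere)
  obtain u where "u \<in> U" "u \<noteq> 0"
    using \<open>U \<noteq> {0}\<close> subspace_0[OF U] by blast
  hence "u /\<^sub>R norm u \<in> S"
    unfolding S_def using U by (simp add: subspace_scale)
  hence "S \<noteq> {}" by auto
  moreover have "continuous_on S (\<lambda>w. w \<bullet> (M *v w))"
    by (intro continuous_intros linear_continuous_on matrix_vector_mul_bounded_linear)
  ultimately obtain z where "z \<in> S" and zmax: "\<And>w. w \<in> S \<Longrightarrow> w \<bullet> (M *v w) \<le> z \<bullet> (M *v z)"
    using continuous_attains_sup[OF \<open>compact S\<close>] by blast
  have "z \<in> U" "z \<bullet> z = 1"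
    using \<open>z \<in> S\<close> unfolding S_def by (auto simp: dot_square_norm)
  have "w \<bullet> (M *v w) \<le> (z \<bullet> (M *v z)) * (w \<bullet> w)" if "w \<in> U" for w
  proof (cases "w = 0")
    case False
    define r where "r = norm w"
    have "w /\<^sub>R r \<in> S"
      unfolding S_def r_def using that False U by (simp add: subspace_scale)
    hence "(w /\<^sub>R r) \<bullet> (M *v (w /\<^sub>R r)) \<le> z \<bullet> (M *v z)"
      by (rule zmax)
    hence "(w \<bullet> (M *v w)) / r\<^sup>2 \<le> z \<bullet> (M *v z)"
      by (simp add: matrix_vector_mult_scaleR power2_eq_square divide_inverse mult.commute mult.left_commute)
    moreover have "w \<bullet> w = r\<^sup>2" and "r > 0"
      unfolding r_def using False by (auto simp: dot_square_norm)
    ultimately show ?thesis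
      by (simp add: divide_le_eq mult.commute)
  qed simp
  hence "M *v z = (z \<bullet> (M *v z)) *\<^sub>R z"
    using rayleigh_maximizer_is_eigenvector[OF sym U inv \<open>z \<in> U\<close> \<open>z \<bullet> z = 1\<close>] by blast
  moreover have "z \<noteq> 0"
    using \<open>z \<bullet> z = 1\<close> by auto
  ultimately show thesis
    using that \<open>z \<in> U\<close> by blast
qed

lemma orthogonal_to_all_eigenvectors_imp_zero:
  fixes M :: "real^'n^'n"
  assumes sym: "transpose M = M" and z: "\<And>\<mu> v. M *v v = \<mu> *\<^sub>R v \<Longrightarrow> z \<bullet> v = 0"
  shows "z = 0"
proof (rule ccontr)
  assume "z \<noteq> 0"
  define U where "U = {u. \<forall>\<mu> v. M *v v = \<mu> *\<^sub>R v \<longrightarrow> u \<bullet> v = 0}"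
  have "subspace U"
    unfolding subspace_def U_def by (auto simp: inner_add_left) (metis add.right_neutral)
  moreover have "M *v u \<in> U" if "u \<in> U" for u
    using that unfolding U_def by (fastforce simp: symmetric_matrix_inner[OF sym])
  moreover have "U \<noteq> {0}"
    using z \<open>z \<noteq> 0\<close> unfolding U_def by blast
  ultimately obtain v l where "v \<in> U" "v \<noteq> 0" "M *v v = l *\<^sub>R v"
    using symmetric_invariant_subspace_has_eigenvector[OF sym] by metis
  hence "v \<bullet> v = 0"
    unfolding U_def by blast
  with \<open>v \<noteq> 0\<close> show False by simp
qed

lemma subspace_eigenspace: "subspace (eigenspace M \<theta>)"
  unfolding subspace_def eigenspace_def
  by (simp add: matrix_vector_right_distrib matrix_vector_mult_scaleR scaleR_add_right)

lemma orth_proj_unique: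
  assumes W: "subspace W" and "y \<in> W" and orth: "\<And>w. w \<in> W \<Longrightarrow> (x - y) \<bullet> w = 0"
  shows "orth_proj W x = y"
  unfolding orth_proj_def
proof (rule the_equality)
  fix y' assume y': "y' \<in> W \<and> (\<forall>w\<in>W. (x - y') \<bullet> w = 0)"
  hence "y' - y \<in> W"
    using \<open>y \<in> W\<close> W by (simp add: subspace_diff)
  have "(y' - y) \<bullet> (y' - y) = (x - y) \<bullet> (y' - y) - (x - y') \<bullet> (y' - y)"
    by (simp add: inner_diff_left)
  also have "\<dots> = 0"
    using orth y' \<open>y' - y \<in> W\<close> by simp
  finally show "y' = y" by simp
qed (use assms in blast)

lemma
  assumes W: "subspace W"
  shows orth_proj_in: "orth_proj W x \<in> W"
    and orth_proj_orthogonal: "w \<in> W \<Longrightarrow> (x - orth_proj W x) \<bullet> w = 0"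
proof -
  obtain y z where "y \<in> span W" and z: "\<And>w. w \<in> span W \<Longrightarrow> orthogonal z w" and "x = y + z"
    using orthogonal_subspace_decomp_exists by blast
  moreover have "span W = W"
    using W by simp
  ultimately have "y \<in> W" and "\<And>w. w \<in> W \<Longrightarrow> (x - y) \<bullet> w = 0"
    by (auto simp: orthogonal_def)
  with orth_proj_unique[OF W] show "orth_proj W x \<in> W" "w \<in> W \<Longrightarrow> (x - orth_proj W x) \<bullet> w = 0"
    by auto
qed

lemma orth_proj_eq_0_iff:
  assumes "subspace W"
  shows "orth_proj W x = 0 \<longleftrightarrow> (\<forall>w\<in>W. x \<bullet> w = 0)"
  using orth_proj_orthogonal[OF assms, of _ x] orth_proj_unique[OF assms subspace_0[OF assms], of x]
  by auto

lemma eig_proj_eq_0_iff: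
  "eig_proj M \<mu> x = 0 \<longleftrightarrow> (\<forall>v. M *v v = \<mu> *\<^sub>R v \<longrightarrow> x \<bullet> v = 0)"
  using orth_proj_eq_0_iff[OF subspace_eigenspace, of M \<mu> x]
  unfolding eig_proj_def eigenspace_def by simp

lemma eigenvalue_support_eq_singleton_iff:
  fixes M :: "real^'n^'n"
  assumes sym: "transpose M = M" and "x \<noteq> 0"
  shows "eigenvalue_support M x = {\<theta>} \<longleftrightarrow> M *v x = \<theta> *\<^sub>R x"
proof
  assume supp: "eigenvalue_support M x = {\<theta>}"
  define y where "y = eig_proj M \<theta> x"
  have y: "M *v y = \<theta> *\<^sub>R y" and orth: "\<And>v. M *v v = \<theta> *\<^sub>R v \<Longrightarrow> (x - y) \<bullet> v = 0"
    using orth_proj_in[OF subspace_eigenspace, of M \<theta> x]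
      orth_proj_orthogonal[OF subspace_eigenspace, of _ M \<theta> x]
    unfolding y_def eig_proj_def eigenspace_def by auto
  have "(x - y) \<bullet> v = 0" if v: "M *v v = \<mu> *\<^sub>R v" for \<mu> v
  proof (cases "\<mu> = \<theta> \<or> v = 0")
    case True
    with orth v show ?thesis by auto
  next
    case False
    hence "is_eigenvalue M \<mu>" and "\<mu> \<noteq> \<theta>"
      using v unfolding is_eigenvalue_def by auto
    hence "eig_proj M \<mu> x = 0"
      using supp unfolding eigenvalue_support_def by auto
    hence "x \<bullet> v = 0"
      using v eig_proj_eq_0_iff by blast
    moreover have "y \<bullet> v = 0"
      using eigenvectors_orthogonal[OF sym y v] \<open>\<mu> \<noteq> \<theta>\<close> by simp
    ultimately show ?thesis
      by (simp add: inner_diff_left)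
  qed
  hence "x = y"
    using orthogonal_to_all_eigenvectors_imp_zero[OF sym] by (metis eq_iff_diff_eq_0)
  with y show "M *v x = \<theta> *\<^sub>R x" by simp
next
  assume x: "M *v x = \<theta> *\<^sub>R x"
  have "eig_proj M \<mu> x = 0" if "\<mu> \<noteq> \<theta>" for \<mu>
    using eigenvectors_orthogonal[OF sym x _ that[symmetric]] eig_proj_eq_0_iff by metis
  moreover have "eig_proj M \<theta> x = x"
    unfolding eig_proj_def using x
    by (intro orth_proj_unique[OF subspace_eigenspace]) (auto simp: eigenspace_def)
  moreover have "is_eigenvalue M \<theta>"
    unfolding is_eigenvalue_def using x \<open>x \<noteq> 0\<close> by blast
  ultimately show "eigenvalue_support M x = {\<theta>}"
    unfolding eigenvalue_support_def using \<open>x \<noteq> 0\<close> by auto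
qed

lemma axis_diff_eigenvector_iff:
  fixes A :: "real^'n^'n"
  assumes "a \<noteq> b"
  shows "A *v (axis a 1 - axis b 1) = \<theta> *\<^sub>R (axis a 1 - axis b 1) \<longleftrightarrow>
    \<theta> = A $ a $ a - A $ a $ b \<and> \<theta> = A $ b $ b - A $ b $ a \<and>
    (\<forall>i. i \<noteq> a \<longrightarrow> i \<noteq> b \<longrightarrow> A $ i $ a = A $ i $ b)"
proof -
  have "(A *v (axis a 1 - axis b 1)) $ i = A $ i $ a - A $ i $ b" for i
    by (simp add: matrix_vector_mult_diff_distrib matrix_vector_mult_basis column_def)
  with assms show ?thesis
    unfolding vec_eq_iff by (auto simp: axis_def)
qed

lemma laplacian_transpose:
  assumes "simple_graph E"
  shows "transpose (laplacian E) = laplacian E"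
  using assms unfolding simple_graph_def laplacian_def transpose_def by (simp add: vec_eq_iff)

lemma twins_iff_same_neighbours:
  assumes "simple_graph E"
  shows "twins E a b \<longleftrightarrow> (\<forall>i. i \<noteq> a \<longrightarrow> i \<noteq> b \<longrightarrow> (E i a \<longleftrightarrow> E i b))"
proof -
  have sym: "E u v \<longleftrightarrow> E v u" and irrefl: "\<not> E v v" for u v
    using assms unfolding simple_graph_def by auto
  have "twins E a b \<longleftrightarrow> (\<forall>i. (E a i \<and> i \<noteq> b) \<longleftrightarrow> (E b i \<and> i \<noteq> a))"
    unfolding twins_def nbhd_def by auto
  also have "\<dots> \<longleftrightarrow> (\<forall>i. i \<noteq> a \<longrightarrow> i \<noteq> b \<longrightarrow> (E i a \<longleftrightarrow> E i b))"
    using sym irrefl by metis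
  finally show ?thesis .
qed

lemma card_nbhd_eq_if_twins:
  assumes "simple_graph E" and "twins E a b"
  shows "card (nbhd E a) = card (nbhd E b)"
proof -
  have "E a b \<longleftrightarrow> E b a"
    using assms(1) unfolding simple_graph_def by auto
  hence mem: "b \<in> nbhd E a \<longleftrightarrow> a \<in> nbhd E b"
    unfolding nbhd_def by simp
  have eq: "card (nbhd E a - {b}) = card (nbhd E b - {a})"
    using assms(2) unfolding twins_def by simp
  show ?thesis
  proof (cases "b \<in> nbhd E a")
    case True
    have "card (nbhd E a) = Suc (card (nbhd E a - {b}))"
      using True by (intro card.remove) auto
    moreover have "card (nbhd E b) = Suc (card (nbhd E b - {a}))"
      using True mem by (intro card.remove) auto
    ultimately show ?thesis
      using eq by simp
  next
    case False
    with mem have "nbhd E a - {b} = nbhd E a" and "nbhd E b - {a} = nbhd E b"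
      by auto
    with eq show ?thesis by simp
  qed
qed

lemma laplacian_axis_diff_eigenvector_iff:
  assumes g: "simple_graph E" and "a \<noteq> b"
  shows "laplacian E *v (axis a 1 - axis b 1) = \<theta> *\<^sub>R (axis a 1 - axis b 1) \<longleftrightarrow>
    twins E a b \<and> \<theta> = real (card (nbhd E a)) + (if E a b then 1 else 0)"
proof -
  let ?L = "laplacian E" and ?e = "if E a b then 1 else 0 :: real"
  have diag_a: "?L $ a $ a - ?L $ a $ b = real (card (nbhd E a)) + ?e"
    and diag_b: "?L $ b $ b - ?L $ b $ a = real (card (nbhd E b)) + ?e"
    and same: "\<And>i. i \<noteq> a \<Longrightarrow> i \<noteq> b \<Longrightarrow> ?L $ i $ a = ?L $ i $ b \<longleftrightarrow> (E i a \<longleftrightarrow> E i b)"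
    using g \<open>a \<noteq> b\<close> unfolding simple_graph_def by (auto simp: laplacian_def)
  have rest: "(\<forall>i. i \<noteq> a \<longrightarrow> i \<noteq> b \<longrightarrow> ?L $ i $ a = ?L $ i $ b) \<longleftrightarrow> twins E a b"
    unfolding twins_iff_same_neighbours[OF g] using same by blast
  show ?thesis
    unfolding axis_diff_eigenvector_iff[OF \<open>a \<noteq> b\<close>] rest diag_a diag_b
    using card_nbhd_eq_if_twins[OF g, of a b] by auto
qed

theorem mainTheorem11:
  fixes E :: "'n::finite \<Rightarrow> 'n \<Rightarrow> bool" and a b :: 'n
  assumes "simple_graph E" and "a \<noteq> b"
  shows "twins E a b \<longleftrightarrow>
    (\<exists>\<theta>. eigenvalue_support (laplacian E) (axis a 1 - axis b 1) = {\<theta>} \<and> \<theta> \<in> \<int>)"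
proof -
  let ?x = "axis a 1 - axis b 1 :: real^'n"
  have "?x $ a = 1"
    using assms(2) by (simp add: axis_def)
  hence "?x \<noteq> 0"
    by (metis zero_index zero_neq_one)
  hence support: "eigenvalue_support (laplacian E) ?x = {\<theta>} \<longleftrightarrow>
      twins E a b \<and> \<theta> = real (card (nbhd E a)) + (if E a b then 1 else 0)" for \<theta>
    using eigenvalue_support_eq_singleton_iff[OF laplacian_transpose[OF assms(1)]]
      laplacian_axis_diff_eigenvector_iff[OF assms] by simp
  have "real (card (nbhd E a)) + (if E a b then 1 else 0) \<in> \<int>"
    by simp
  with support show ?thesis by blast
qed

end
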